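(* Let $n = 4k+1$ with $k\ge 1$ an integer, and let $m \ge 3n-2$. Then every product $(a,a+2)(b,b+2)\in S_m$ of two even-string transpositions, and every such product of two odd-string transpositions, with $a,a+2,b,b+2$ four distinct numbers, is a product of $n$-crossing permutations over $S_m$.
   Context: For integers $2\le n\le m$ and $1 \le j \le m-n+1$, the $n$-crossing permutation $\pi_j\in S_m$ is $\pi_j=(j,\,j+n-1)(j+1,\,j+n-2)\cdots$, i.e. the involution sending $i \mapsto 2j+n-1-i$ for $j\le i\le j+n-1$ and fixing all other elements of $\{1,\dots,m\}$. The $n$-crossing permutations over $S_m$ are $\pi_1,\dots,\pi_{m-n+1}$. A transposition $(i,i+2)\in S_m$ (with $1\le i\le m-2$) is called an even-string transposition if $i$ is even and an odd-string transposition if $i$ is odd. *)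

theory Defs
  imports "HOL-Combinatorics.Transposition"
begin

text \<open>Permutations of S_m are modelled as functions nat => nat that act on {1..m}
  and fix every other number.\<close>

definition crossing :: "nat \<Rightarrow> nat \<Rightarrow> nat \<Rightarrow> nat" where
  "crossing n j = (\<lambda>i. if j \<le> i \<and> i \<le> j + n - 1 then 2 * j + n - 1 - i else i)"

definition crossing_product :: "nat \<Rightarrow> nat \<Rightarrow> (nat \<Rightarrow> nat) \<Rightarrow> bool" where
  "crossing_product n m p \<longleftrightarrow>
     (\<exists>js. set js \<subseteq> {1..m - n + 1} \<and> p = foldr (\<circ>) (map (crossing n) js) id)"

end

theory Submission
  imports Defs "HOL-Combinatorics.Cycles"
begin

text \<open>The crossings pi_j pi_{j+1} pi_{j+2} pi_{j+1} multiply to the 3-cycle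
  (j, j+n-1, j+n+1), and conjugating it by pi_{j+2} gives (j, j+4, j+2). For odd n both move
  points of a single parity, and each point w >= 5 is the last entry of one of them whose other
  two entries are smaller points of the same parity. Since the 3-cycles (u v p) and (u v w)
  generate (u p w), induction on w shows that every 3-cycle on a parity class is a product of
  crossings, and (a c)(b d) = (a b c)(a b d) finishes the proof.\<close>

lemma cycle3_swap:
  "distinct [x, y, z] \<Longrightarrow>
     cycle_of_list [y, x, z] = cycle_of_list [x, y, z] \<circ> cycle_of_list [x, y, z]"
  by (auto simp: fun_eq_iff transpose_def)

lemma cycle3_rotate:
  "distinct [x, y, z] \<Longrightarrow> cycle_of_list [y, z, x] = cycle_of_list [x, y, z]"
  by (auto simp: fun_eq_iff transpose_def)

lemma cycle3_pivot:
  "distinct [a, b, c, d] \<Longrightarrow>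
     cycle_of_list [a, c, d]
       = cycle_of_list [a, b, d] \<circ> cycle_of_list [a, b, c] \<circ> cycle_of_list [a, b, c]"
  by (auto simp: fun_eq_iff transpose_def)

lemma transpose_comp_transpose_eq_cycle3_comp:
  "distinct [a, c, b, d] \<Longrightarrow>
     transpose a c \<circ> transpose b d = cycle_of_list [a, b, c] \<circ> cycle_of_list [a, b, d]"
  by (auto simp: fun_eq_iff transpose_def)

locale comp_closed =
  fixes P :: "('a \<Rightarrow> 'a) \<Rightarrow> bool"
  assumes comp_closed: "P f \<Longrightarrow> P g \<Longrightarrow> P (f \<circ> g)"
begin

definition contains_3cycles :: "'a set \<Rightarrow> bool" where
  "contains_3cycles S \<longleftrightarrow>
     (\<forall>x\<in>S. \<forall>y\<in>S. \<forall>z\<in>S. distinct [x, y, z] \<longrightarrow> P (cycle_of_list [x, y, z]))"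

lemma contains_3cycles_subset_pair: "S \<subseteq> {a, b} \<Longrightarrow> contains_3cycles S"
  unfolding contains_3cycles_def by auto

lemma contains_3cycles_triple:
  assumes "distinct [x, y, z]" and "P (cycle_of_list [x, y, z])"
  shows "contains_3cycles {x, y, z}"
proof -
  have rotate: "P (cycle_of_list [y, z, x])" if "distinct [x, y, z]" "P (cycle_of_list [x, y, z])"
    for x y z
    using that cycle3_rotate by metis
  have swap: "P (cycle_of_list [y, x, z])" if "distinct [x, y, z]" "P (cycle_of_list [x, y, z])"
    for x y z
    using that cycle3_swap comp_closed by metis
  have distinct: "distinct [y, z, x]" "distinct [y, x, z]" "distinct [x, z, y]"
    using assms(1) by auto
  have yzx: "P (cycle_of_list [y, z, x])"
    using assms by (rule rotate)
  have zxy: "P (cycle_of_list [z, x, y])"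
    by (rule rotate[OF distinct(1) yzx])
  have yxz: "P (cycle_of_list [y, x, z])"
    using assms by (rule swap)
  have xzy: "P (cycle_of_list [x, z, y])"
    by (rule rotate[OF distinct(2) yxz])
  have zyx: "P (cycle_of_list [z, y, x])"
    by (rule rotate[OF distinct(3) xzy])
  show ?thesis
    using assms yzx zxy yxz xzy zyx unfolding contains_3cycles_def by auto
qed

lemma contains_3cyclesD:
  "contains_3cycles S \<Longrightarrow> x \<in> S \<Longrightarrow> y \<in> S \<Longrightarrow> z \<in> S \<Longrightarrow> distinct [x, y, z] \<Longrightarrow>
     P (cycle_of_list [x, y, z])"
  unfolding contains_3cycles_def by blast

lemma cycle3_pivot_closed:
  assumes "distinct [a, b, c, d]" "P (cycle_of_list [a, b, c])" "P (cycle_of_list [a, b, d])"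
  shows "P (cycle_of_list [a, c, d])"
  using assms by (simp only: cycle3_pivot comp_closed)

lemma contains_3cycles_insert_pair:
  assumes S: "contains_3cycles S" and "u \<in> S" "v \<in> S" "w \<notin> S" "u \<noteq> v"
    and uvw: "P (cycle_of_list [u, v, w])"
    and "x \<in> S" "y \<in> S" "x \<noteq> y"
  shows "contains_3cycles {x, y, w}"
proof -
  have through_u: "P (cycle_of_list [u, p, w])" if "p \<in> S" "p \<noteq> u" for p
  proof (cases "p = v")
    case False
    have uvpw: "distinct [u, v, p, w]"
      using assms that False by auto
    have uvp: "P (cycle_of_list [u, v, p])"
      by (rule contains_3cyclesD[OF S]) (use assms that False in auto)
    show ?thesis
      by (rule cycle3_pivot_closed[OF uvpw uvp uvw])
  qed (use uvw in \<open>simp only:\<close>)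
  have with_u: "contains_3cycles {u, p, w}" if "p \<in> S" "p \<noteq> u" for p
    by (rule contains_3cycles_triple[OF _ through_u[OF that]]) (use assms that in auto)
  consider "x = u" | "y = u" | "u \<notin> {x, y}"
    by blast
  then show ?thesis
  proof cases
    case 1
    then show ?thesis
      using with_u[of y] assms by simp
  next
    case 2
    then show ?thesis
      using with_u[of x] assms by (simp add: insert_commute)
  next
    case 3
    have xuw: "P (cycle_of_list [x, u, w])"
      by (rule contains_3cyclesD[OF with_u[of x]]) (use assms 3 in auto)
    have xuy: "P (cycle_of_list [x, u, y])"
      by (rule contains_3cyclesD[OF S]) (use assms 3 in auto)
    have xuwy: "distinct [x, u, w, y]"
      using assms 3 by auto
    have "P (cycle_of_list [x, w, y])"
      by (rule cycle3_pivot_closed[OF xuwy xuw xuy])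
    then have "contains_3cycles {x, w, y}"
      by (rule contains_3cycles_triple[rotated]) (use assms in auto)
    then show ?thesis
      by (simp add: insert_commute)
  qed
qed

lemma contains_3cycles_insert:
  assumes S: "contains_3cycles S" and "u \<in> S" "v \<in> S" "w \<notin> S" "u \<noteq> v"
    and "P (cycle_of_list [u, v, w])"
  shows "contains_3cycles (insert w S)"
  unfolding contains_3cycles_def
proof (intro ballI impI)
  note pair = contains_3cycles_insert_pair[OF assms]
  fix x y z
  assume xyz: "x \<in> insert w S" "y \<in> insert w S" "z \<in> insert w S" "distinct [x, y, z]"
  consider "x = w" | "y = w" | "z = w" | "x \<in> S" "y \<in> S" "z \<in> S"
    using xyz by auto
  then show "P (cycle_of_list [x, y, z])"
  proof cases
    case 1
    then have "contains_3cycles {y, z, w}"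
      by (intro pair) (use xyz in auto)
    then show ?thesis
      by (rule contains_3cyclesD) (use xyz 1 in auto)
  next
    case 2
    then have "contains_3cycles {x, z, w}"
      by (intro pair) (use xyz in auto)
    then show ?thesis
      by (rule contains_3cyclesD) (use xyz 2 in auto)
  next
    case 3
    then have "contains_3cycles {x, y, w}"
      by (intro pair) (use xyz in auto)
    then show ?thesis
      by (rule contains_3cyclesD) (use xyz 3 in auto)
  qed (rule contains_3cyclesD[OF S], use xyz in auto)
qed

end

lemma foldr_comp_eq_comp_foldr: "foldr (\<circ>) fs g = foldr (\<circ>) fs id \<circ> g"
  by (induction fs) auto

lemma crossing_product_comp:
  assumes "crossing_product n m f" and "crossing_product n m g"
  shows "crossing_product n m (f \<circ> g)"
proof -
  obtain ks js where "set ks \<subseteq> {1..m - n + 1}" "f = foldr (\<circ>) (map (crossing n) ks) id"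
    and "set js \<subseteq> {1..m - n + 1}" "g = foldr (\<circ>) (map (crossing n) js) id"
    using assms unfolding crossing_product_def by blast
  then show ?thesis
    unfolding crossing_product_def
    by (intro exI[of _ "ks @ js"])
      (simp add: foldr_comp_eq_comp_foldr[of _ "foldr (\<circ>) (map (crossing n) js) id"])
qed

interpretation crossing_products: comp_closed "crossing_product n m" for n m
  by unfold_locales (rule crossing_product_comp)

lemma crossing_product_crossing:
  "1 \<le> j \<Longrightarrow> j \<le> m - n + 1 \<Longrightarrow> crossing_product n m (crossing n j)"
  unfolding crossing_product_def by (intro exI[of _ "[j]"]) auto

lemma crossing_involution: "crossing n j (crossing n j i) = i"
  unfolding crossing_def by auto

lemma crossing_conj_cycle:
  assumes "distinct cs"
  shows "crossing n j \<circ> cycle_of_list cs \<circ> crossing n j = cycle_of_list (map (crossing n j) cs)"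
proof -
  have "crossing n j \<circ> crossing n j = id"
    by (simp add: fun_eq_iff crossing_involution)
  then have "bij (crossing n j)" and "inv (crossing n j) = crossing n j"
    by (auto intro: o_bij inv_equality simp: crossing_involution)
  then show ?thesis
    using conjugation_of_cycle[OF assms] by metis
qed

lemma crossing_word_eq_cycle3:
  assumes "2 \<le> n"
  shows "crossing n j \<circ> crossing n (j + 1) \<circ> crossing n (j + 2) \<circ> crossing n (j + 1)
           = cycle_of_list [j, j + n - 1, j + n + 1]"
proof
  fix i
  consider "i < j" | "i = j" | "i = j + 1" | "j + 2 \<le> i \<and> i + 2 \<le> j + n" | "i = j + n - 1"
    | "i = j + n" | "i = j + n + 1" | "i > j + n + 1"
    using assms by linarith
  then show "(crossing n j \<circ> crossing n (j + 1) \<circ> crossing n (j + 2) \<circ> crossing n (j + 1)) i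
               = cycle_of_list [j, j + n - 1, j + n + 1] i"
    using assms by cases (auto simp: crossing_def transpose_def)
qed

lemma crossing_product_long_cycle3:
  assumes "2 \<le> n" "1 \<le> j" "j + 2 \<le> m - n + 1"
  shows "crossing_product n m (cycle_of_list [j, j + n - 1, j + n + 1])"
proof -
  have "crossing_product n m
          (crossing n j \<circ> crossing n (j + 1) \<circ> crossing n (j + 2) \<circ> crossing n (j + 1))"
    using assms by (intro crossing_product_comp crossing_product_crossing) auto
  then show ?thesis
    by (simp only: crossing_word_eq_cycle3[OF assms(1)])
qed

lemma crossing_product_short_cycle3:
  assumes "3 \<le> n" "1 \<le> j" "j + 2 \<le> m - n + 1"
  shows "crossing_product n m (cycle_of_list [j, j + 4, j + 2])"
proof -
  let ?c = "crossing n (j + 2)" and ?cs = "[j, j + n - 1, j + n + 1]"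
  have "crossing_product n m (?c \<circ> cycle_of_list ?cs \<circ> ?c)"
    using assms by (intro crossing_product_comp crossing_product_crossing
        crossing_product_long_cycle3) auto
  also have "?c \<circ> cycle_of_list ?cs \<circ> ?c = cycle_of_list (map ?c ?cs)"
    using assms by (intro crossing_conj_cycle) auto
  also have "map ?c ?cs = [j, j + 4, j + 2]"
    using assms by (auto simp: crossing_def)
  finally show ?thesis .
qed

lemma crossing_product_cycle3_ending_at:
  assumes "odd n" "3 \<le> n" "2 * n - 2 \<le> m" "5 \<le> w" "w \<le> m"
  obtains u v where "u \<in> {x \<in> {1..<w}. odd x = odd w}" "v \<in> {x \<in> {1..<w}. odd x = odd w}"
    "u \<noteq> v" "crossing_product n m (cycle_of_list [u, v, w])"
proof (cases "w \<le> n + 1")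
  case True
  define j where "j = w - 4"
  have "crossing_product n m (cycle_of_list [j, j + 4, j + 2])"
    using assms True unfolding j_def by (intro crossing_product_short_cycle3) auto
  then have "crossing_products.contains_3cycles n m {j, j + 4, j + 2}"
    by (intro crossing_products.contains_3cycles_triple) auto
  then have "crossing_product n m (cycle_of_list [j + 2, j, j + 4])"
    by (rule crossing_products.contains_3cyclesD) auto
  moreover have "j + 4 = w"
    using assms unfolding j_def by simp
  ultimately show ?thesis
    using that[of "j + 2" j] assms unfolding j_def by auto
next
  case False
  define j where "j = w - (n + 1)"
  have "crossing_product n m (cycle_of_list [j, j + n - 1, j + n + 1])"
    using assms False unfolding j_def by (intro crossing_product_long_cycle3) auto
  moreover have "j + n + 1 = w"
    using False unfolding j_def by simp
  ultimately show ?thesis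
    using that[of j "j + n - 1"] assms False unfolding j_def by auto
qed

lemma crossing_products_contains_3cycles_parity_class:
  assumes "odd n" "3 \<le> n" "2 * n - 2 \<le> m" "w \<le> m"
  shows "crossing_products.contains_3cycles n m {x \<in> {1..w}. odd x = q}"
  using assms(4)
proof (induction w)
  case 0
  then show ?case
    by (simp add: crossing_products.contains_3cycles_def)
next
  case (Suc w)
  let ?S = "{x \<in> {1..w}. odd x = q}"
  have IH: "crossing_products.contains_3cycles n m ?S"
    using Suc by simp
  show ?case
  proof (cases "odd (Suc w) = q")
    case False
    then have "{x \<in> {1..Suc w}. odd x = q} = ?S"
      by (auto simp: le_Suc_eq)
    with IH show ?thesis by simp
  next
    case True
    then have insert: "{x \<in> {1..Suc w}. odd x = q} = insert (Suc w) ?S"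
      by (auto simp: le_Suc_eq)
    show ?thesis
    proof (cases "Suc w \<le> 4")
      case small: True
      define a :: nat where "a = (if q then 1 else 2)"
      have "x = a \<or> x = a + 2" if "x \<in> {x \<in> {1..Suc w}. odd x = q}" for x
        using that small unfolding a_def by (cases q) (auto, presburger+)
      then show ?thesis
        by (intro crossing_products.contains_3cycles_subset_pair[where a = a and b = "a + 2"]) blast
    next
      case False
      then obtain u v where "u \<in> ?S" "v \<in> ?S" "u \<noteq> v"
        and "crossing_product n m (cycle_of_list [u, v, Suc w])"
        using crossing_product_cycle3_ending_at[of n m "Suc w"] assms Suc.prems True
        by (auto simp: less_Suc_eq_le)
      then show ?thesis
        unfolding insert by (intro crossing_products.contains_3cycles_insert[OF IH]) auto
    qed
  qed
qed

theorem lemma4p4: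
  fixes k n m a b :: nat
  assumes "k \<ge> 1" and "n = 4 * k + 1" and "m \<ge> 3 * n - 2"
    and "1 \<le> a" and "a + 2 \<le> m" and "1 \<le> b" and "b + 2 \<le> m"
    and "(even a \<and> even b) \<or> (odd a \<and> odd b)"
    and "distinct [a, a + 2, b, b + 2]"
  shows "crossing_product n m (transpose a (a + 2) \<circ> transpose b (b + 2))"
proof -
  let ?S = "{x \<in> {1..m}. odd x = odd a}"
  have "crossing_products.contains_3cycles n m ?S"
    using assms by (intro crossing_products_contains_3cycles_parity_class) auto
  moreover have "a \<in> ?S" "b \<in> ?S" "a + 2 \<in> ?S" "b + 2 \<in> ?S"
    using assms by auto
  ultimately have "crossing_product n m (cycle_of_list [a, b, a + 2])"
    and "crossing_product n m (cycle_of_list [a, b, b + 2])"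
    using crossing_products.contains_3cyclesD assms(9) by auto
  then show ?thesis
    using transpose_comp_transpose_eq_cycle3_comp[of a "a + 2" b "b + 2"] assms(9)
    by (auto intro: crossing_product_comp)
qed

end
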